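(* Let $A$ be a random variable with values in $\{u,v\}$, $\mathbb{P}(A=u)=p_u$, $\mathbb{P}(A=v)=p_v$, $p_u+p_v=1$, and let $(U,V)$ be independent of $A$ and follow a bivariate $t$ distribution with location vector $(\mu,\mu)$, $\mu<0$, scale matrix $\Sigma=\begin{pmatrix}\sigma^2&\rho\sigma^2\\ \rho\sigma^2&\sigma^2\end{pmatrix}$ with $\sigma>0$, and degrees of freedom $\delta>2$. Let \[f(z)=p_u\,\mathbb{P}(U>z)\,\mathbb{E}[U+V\mid U>z]+p_v\,\mathbb{P}(V>z)\,\mathbb{E}[U+V\mid V>z].\] If \[-1\le\rho<2\left(\frac{-\mu}{\sigma}\right)W\left(\frac{-\mu}{\sigma}\right)-1,\qquad W(\alpha)=\left(\frac{\delta-2}{\delta}\right)\frac{1-T_\delta(\alpha;0,1)}{t_{\delta-2}\left(\alpha;0,\frac{\delta}{\delta-2}\right)},\] then $f(0)<0$.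
   Context: For $\nu>0$, $t_\nu(x;m,s^2)=\frac{\Gamma\left(\frac{\nu+1}{2}\right)}{\sqrt{s^2\nu\pi}\,\Gamma\left(\frac{\nu}{2}\right)}\left(1+\frac{(x-m)^2}{s^2\nu}\right)^{-\frac{\nu+1}{2}}$ is the density of the univariate $t$ distribution with $\nu$ degrees of freedom, location $m$ and squared scale $s^2$, and $T_\nu(\cdot;m,s^2)$ is the corresponding CDF. The bivariate $t$ distribution with location $m$, scale matrix $\Sigma$ and $\delta$ degrees of freedom has density proportional to $\left(1+(x-m)^\top\Sigma^{-1}(x-m)/\delta\right)^{-(\delta+2)/2}$; its marginals are univariate $t_\delta$ with location $\mu$ and squared scale $\sigma^2$. $f(0)=\mathbb{E}[D(U+V)]$ with $D=\mathbb{I}(A=u,U>0)+\mathbb{I}(A=v,V>0)$ is the long-run average overall performance under zero-threshold adoption. *)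

theory Defs
  imports "HOL-Probability.Probability"
begin

text \<open>Density of the univariate t distribution with nu degrees of freedom,
  location m and squared scale s2.\<close>
definition t_density :: "real \<Rightarrow> real \<Rightarrow> real \<Rightarrow> real \<Rightarrow> real" where
  "t_density \<nu> m s2 x =
     Gamma ((\<nu> + 1) / 2) / (sqrt (s2 * \<nu> * pi) * Gamma (\<nu> / 2))
     * (1 + (x - m)^2 / (s2 * \<nu>)) powr (- (\<nu> + 1) / 2)"

definition t_cdf :: "real \<Rightarrow> real \<Rightarrow> real \<Rightarrow> real \<Rightarrow> real" where
  "t_cdf \<nu> m s2 x = (LBINT y:{..x}. t_density \<nu> m s2 y)"

definition t_measure :: "real \<Rightarrow> real \<Rightarrow> real \<Rightarrow> real measure" where
  "t_measure \<nu> m s2 = density lborel (\<lambda>x. ennreal (t_density \<nu> m s2 x))"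

definition bivt_density :: "real \<Rightarrow> real \<Rightarrow> real \<Rightarrow> real \<Rightarrow> real \<times> real \<Rightarrow> real" where
  "bivt_density \<mu> \<sigma> \<rho> \<delta> xy =
     (let a = fst xy - \<mu>; b = snd xy - \<mu>;
          q = (a^2 - 2 * \<rho> * a * b + b^2) / (\<sigma>^2 * (1 - \<rho>^2))
      in Gamma ((\<delta> + 2) / 2) / (Gamma (\<delta> / 2) * \<delta> * pi * \<sigma>^2 * sqrt (1 - \<rho>^2))
         * (1 + q / \<delta>) powr (- (\<delta> + 2) / 2))"

text \<open>For |rho| = 1 the
  scale matrix is singular and the distribution is the standard degenerate one,
  concentrated on a line: (U,V) = (X, 2 mu - X) for rho = -1 and (X, X) for
  rho = 1, with X univariate t(delta; mu, sigma^2).\<close>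
definition bivt_measure :: "real \<Rightarrow> real \<Rightarrow> real \<Rightarrow> real \<Rightarrow> (real \<times> real) measure" where
  "bivt_measure \<mu> \<sigma> \<rho> \<delta> =
     (if \<rho> = -1 then distr (t_measure \<delta> \<mu> (\<sigma>^2)) lborel (\<lambda>x. (x, 2 * \<mu> - x))
      else if \<rho> = 1 then distr (t_measure \<delta> \<mu> (\<sigma>^2)) lborel (\<lambda>x. (x, x))
      else density lborel (\<lambda>xy. ennreal (bivt_density \<mu> \<sigma> \<rho> \<delta> xy)))"

definition cond_exp_event :: "'a measure \<Rightarrow> ('a \<Rightarrow> real) \<Rightarrow> 'a set \<Rightarrow> real" where
  "cond_exp_event M X S = (\<integral>\<omega>. X \<omega> * indicator S \<omega> \<partial>M) / measure M S"

definition W_fun :: "real \<Rightarrow> real \<Rightarrow> real" where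
  "W_fun \<delta> \<alpha> = ((\<delta> - 2) / \<delta>) * (1 - t_cdf \<delta> 0 1 \<alpha>)
                 / t_density (\<delta> - 2) 0 (\<delta> / (\<delta> - 2)) \<alpha>"

end

(*
  Because (U, V) is exchangeable, E[(U+V) 1{V>0}] = E[(U+V) 1{U>0}], so f(0) is this common
  value whatever the law of A.  Write U + V = 2 mu + (1 + rho)(U - mu) + (V - mu - rho (U - mu)).
  The bivariate t density is invariant under reflecting v about the conditional mean
  mu + rho (u - mu), so the last summand has mean zero on every event determined by U (for
  rho = 1 or rho = -1 it vanishes identically).  Since the marginal of U is t(delta; mu, sigma^2),
  what remains is, with Z standard t and alpha = -mu/sigma,
    2 mu (1 - T_delta(alpha)) + (1 + rho) sigma E[Z 1{Z > alpha}],
  and z t_delta(z) has the explicit antiderivative -(delta/(delta-2)) t_{delta-2}(z; 0, delta/(delta-2)).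
  The hypothesis on rho says exactly that this quantity is negative.
*)
theory Submission
  imports Defs "HOL-Real_Asymp.Real_Asymp"
begin

lemma borel_measurable_fst [measurable]:
  "fst \<in> borel_measurable (borel :: ('a::topological_space \<times> 'b::topological_space) measure)"
  by (intro borel_measurable_continuous_onI continuous_on_fst continuous_on_id)

lemma borel_measurable_snd [measurable]:
  "snd \<in> borel_measurable (borel :: ('a::topological_space \<times> 'b::topological_space) measure)"
  by (intro borel_measurable_continuous_onI continuous_on_snd continuous_on_id)

lemma measurable_swap_borel [measurable]:
  "(\<lambda>(x, y). (y, x))
     \<in> measurable (borel :: ('a::second_countable_topology \<times> 'b::second_countable_topology) measure) borel"
  unfolding case_prod_beta by (intro borel_measurable_continuous_onI continuous_intros)

lemma distr_lborel_swap: "distr lborel lborel (\<lambda>(x, y). (y, x)) = (lborel :: (real \<times> real) measure)"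
  using lborel_pair.distr_pair_swap[symmetric] by (simp add: lborel_prod)

lemma distr_lborel_reflect_snd:
  assumes [measurable]: "c \<in> borel_measurable borel"
  shows "distr lborel lborel (\<lambda>(x, y). (x, c x - y)) = (lborel :: (real \<times> real) measure)"
proof (rule measure_eqI)
  fix A :: "(real \<times> real) set"
  assume "A \<in> sets (distr lborel lborel (\<lambda>(x, y). (x, c x - y)))"
  then have [measurable]: "A \<in> sets borel"
    by simp
  have "emeasure (distr lborel lborel (\<lambda>(x, y). (x, c x - y))) A
      = (\<integral>\<^sup>+p. indicator A (fst p, c (fst p) - snd p) \<partial>(lborel \<Otimes>\<^sub>M lborel))"
  proof -
    have "(\<lambda>(x, y). (x, c x - y)) \<in> measurable lborel (lborel :: (real \<times> real) measure)"
      unfolding case_prod_beta by simp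
    then have "(\<integral>\<^sup>+p. indicator A p \<partial>distr lborel lborel (\<lambda>(x, y). (x, c x - y)))
        = (\<integral>\<^sup>+p. indicator A ((\<lambda>(x, y). (x, c x - y)) p) \<partial>lborel)"
      by (rule nn_integral_distr) simp
    then show ?thesis
      by (simp add: lborel_prod case_prod_beta)
  qed
  also have "\<dots> = (\<integral>\<^sup>+x. \<integral>\<^sup>+y. indicator A (x, c x - y) \<partial>lborel \<partial>lborel)"
    by (subst lborel.nn_integral_fst[symmetric]) (simp_all add: lborel_prod)
  also have "\<dots> = (\<integral>\<^sup>+x. \<integral>\<^sup>+y. indicator A (x, y) \<partial>lborel \<partial>lborel)"
  proof (rule nn_integral_cong)
    fix x :: real
    show "(\<integral>\<^sup>+y. indicator A (x, c x - y) \<partial>lborel) = (\<integral>\<^sup>+y. indicator A (x, y) \<partial>lborel)"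
      using nn_integral_real_affine[of "\<lambda>y. indicator A (x, y)" "-1" "c x"] by simp
  qed
  also have "\<dots> = emeasure lborel A"
    using lborel.nn_integral_fst[of "indicator A"] by (simp add: lborel_prod)
  finally show "emeasure (distr lborel lborel (\<lambda>(x, y). (x, c x - y))) A = emeasure lborel A" .
qed simp

lemma integral_eq_zero_if_odd:
  fixes h :: "'a \<Rightarrow> real"
  assumes "T \<in> measurable M M" and "distr M M T = M" and "h \<in> borel_measurable M"
    and "\<And>x. x \<in> space M \<Longrightarrow> h (T x) = - h x"
  shows "integral\<^sup>L M h = 0"
proof -
  have "integral\<^sup>L M h = integral\<^sup>L (distr M M T) h"
    using assms(2) by simp
  also have "\<dots> = (\<integral>x. h (T x) \<partial>M)"
    using assms(1,3) by (rule integral_distr)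
  also have "\<dots> = (\<integral>x. - h x \<partial>M)"
    using assms(4) by (rule Bochner_Integration.integral_cong[OF refl])
  finally show ?thesis
    by simp
qed

lemma measure_mult_cond_exp_event:
  assumes "finite_measure M" and "S \<in> sets M"
  shows "measure M S * cond_exp_event M X S = (\<integral>\<omega>. X \<omega> * indicator S \<omega> \<partial>M)"
proof (cases "measure M S = 0")
  case True
  then have "S \<in> null_sets M"
    using assms by (simp add: finite_measure.emeasure_eq_measure null_sets_def)
  then have "AE \<omega> in M. X \<omega> * indicator S \<omega> = 0"
    by (rule AE_mp[OF AE_not_in]) (simp add: indicator_def)
  then show ?thesis
    using True by (simp add: integral_eq_zero_AE)
qed (simp add: cond_exp_event_def)

section \<open>Gaussian and Gamma integrals\<close>

lemma nn_integral_exp_neg_mult_square: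
  fixes t :: real
  assumes "t > 0"
  shows "(\<integral>\<^sup>+x. ennreal (exp (- (t * x\<^sup>2))) \<partial>lborel) = ennreal (sqrt (pi / t))"
proof -
  define s where "s = 1 / sqrt (2 * t)"
  have "s > 0" and "2 * s\<^sup>2 = 1 / t" and "2 * pi * s\<^sup>2 = pi / t"
    using assms by (simp_all add: s_def power_divide)
  then have "exp (- (t * x\<^sup>2)) = sqrt (pi / t) * normal_density 0 s x" for x
    using assms by (simp add: normal_density_def mult.commute)
  then have "(\<integral>\<^sup>+x. ennreal (exp (- (t * x\<^sup>2))) \<partial>lborel)
      = ennreal (sqrt (pi / t)) * (\<integral>\<^sup>+x. ennreal (normal_density 0 s x) \<partial>lborel)"
    using assms by (subst nn_integral_cmult[symmetric])
      (auto simp: ennreal_mult intro!: nn_integral_cong)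
  also have "(\<integral>\<^sup>+x. ennreal (normal_density 0 s x) \<partial>lborel) = 1"
    using \<open>s > 0\<close> by (subst nn_integral_eq_integral) auto
  finally show ?thesis by simp
qed

lemma nn_integral_Gamma_scaled:
  fixes s c :: real
  assumes "s > 0" and "c > 0"
  shows "(\<integral>\<^sup>+u. ennreal (indicator {0..} u * u powr (s - 1) * exp (- (c * u))) \<partial>lborel)
         = ennreal (Gamma s / c powr s)"
proof -
  define f where "f v = ennreal (indicator {0..} v * v powr (s - 1) / exp v / c powr s)" for v :: real
  have "ennreal (indicator {0..} u * u powr (s - 1) * exp (- (c * u))) = ennreal c * f (0 + c * u)"
    for u :: real
  proof (cases "u \<ge> 0")
    case True
    have "c * c powr (s - 1) = c powr s"
      using assms by (simp add: powr_diff)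
    with True assms show ?thesis
      by (simp add: f_def ennreal_mult[symmetric] powr_mult exp_minus field_simps)
  qed (use assms in \<open>simp add: f_def indicator_def zero_le_mult_iff\<close>)
  then have "(\<integral>\<^sup>+u. ennreal (indicator {0..} u * u powr (s - 1) * exp (- (c * u))) \<partial>lborel)
      = ennreal c * (\<integral>\<^sup>+u. f (0 + c * u) \<partial>lborel)"
    by (simp add: nn_integral_cmult f_def)
  also have "\<dots> = (\<integral>\<^sup>+v. f v \<partial>lborel)"
  proof -
    have "f \<in> borel_measurable borel"
      unfolding f_def by measurable
    from nn_integral_real_affine[OF this, of c 0] show ?thesis
      using assms by simp
  qed
  also have "\<dots> = ennreal (1 / c powr s) * ennreal (Gamma s)"
    using assms by (subst Gamma_conv_nn_integral_real)
      (auto simp: f_def nn_integral_cmult[symmetric] ennreal_mult[symmetric] intro!: nn_integral_cong)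
  finally show ?thesis
    using assms by (simp add: ennreal_mult[symmetric] Gamma_real_pos less_imp_le)
qed

lemma nn_integral_Gamma_Gauss_slice:
  fixes s u :: real
  shows "(\<integral>\<^sup>+w. ennreal (indicator {0..} u * u powr (s - 1) * exp (- ((1 + w\<^sup>2) * u))) \<partial>lborel)
         = ennreal (sqrt pi * (indicator {0..} u * u powr (s - 1/2 - 1) / exp u))"
proof (cases "u > 0")
  case True
  have sqrt_factor: "u powr (s - 1) * sqrt (pi / u) = sqrt pi * u powr (s - 1/2 - 1)"
  proof -
    have "u powr (s - 1) = u powr (s - 1/2 - 1) * sqrt u"
      using True by (simp add: powr_half_sqrt[symmetric] powr_add[symmetric])
    then show ?thesis
      using True by (simp add: real_sqrt_divide)
  qed
  have "(\<integral>\<^sup>+w. ennreal (indicator {0..} u * u powr (s - 1) * exp (- ((1 + w\<^sup>2) * u))) \<partial>lborel)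
      = ennreal (u powr (s - 1) * exp (- u)) * (\<integral>\<^sup>+w. ennreal (exp (- (u * w\<^sup>2))) \<partial>lborel)"
    using True by (subst nn_integral_cmult[symmetric])
      (auto simp: ennreal_mult[symmetric] algebra_simps exp_add[symmetric] intro!: nn_integral_cong)
  also have "\<dots> = ennreal (u powr (s - 1) * exp (- u)) * ennreal (sqrt (pi / u))"
    by (simp only: nn_integral_exp_neg_mult_square[OF True])
  also have "\<dots> = ennreal (sqrt pi * (indicator {0..} u * u powr (s - 1/2 - 1) / exp u))"
    using True sqrt_factor by (simp add: ennreal_mult[symmetric] exp_minus field_simps)
  finally show ?thesis .
qed (auto simp: indicator_def)

lemma nn_integral_one_plus_square_powr:
  fixes s :: real
  assumes "s > 1/2"
  shows "(\<integral>\<^sup>+w. ennreal ((1 + w\<^sup>2) powr (- s)) \<partial>lborel) = ennreal (sqrt pi * Gamma (s - 1/2) / Gamma s)"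
proof -
  have Gamma_pos: "Gamma s > 0" "Gamma (s - 1/2) > 0"
    using assms by (simp_all add: Gamma_real_pos)
  define f where "f w u = ennreal (indicator {0..} u * u powr (s - 1) * exp (- ((1 + w\<^sup>2) * u)))"
    for w u :: real
  have "(\<integral>\<^sup>+w. ennreal ((1 + w\<^sup>2) powr (- s)) \<partial>lborel)
      = ennreal (1 / Gamma s) * (\<integral>\<^sup>+w. ennreal (Gamma s / (1 + w\<^sup>2) powr s) \<partial>lborel)"
  proof -
    have "ennreal ((1 + w\<^sup>2) powr (- s)) = ennreal (1 / Gamma s) * ennreal (Gamma s / (1 + w\<^sup>2) powr s)"
      for w :: real
    proof -
      have "(1 + w\<^sup>2) powr (- s) = 1 / Gamma s * (Gamma s / (1 + w\<^sup>2) powr s)"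
        using Gamma_pos by (simp add: powr_minus_divide)
      then show ?thesis
        using Gamma_pos by (simp only:) (intro ennreal_mult; simp)
    qed
    then show ?thesis
      by (simp add: nn_integral_cmult)
  qed
  also have "(\<integral>\<^sup>+w. ennreal (Gamma s / (1 + w\<^sup>2) powr s) \<partial>lborel) = (\<integral>\<^sup>+w. \<integral>\<^sup>+u. f w u \<partial>lborel \<partial>lborel)"
    using assms by (intro nn_integral_cong) (simp add: f_def nn_integral_Gamma_scaled add_pos_nonneg)
  also have "\<dots> = (\<integral>\<^sup>+u. \<integral>\<^sup>+w. f w u \<partial>lborel \<partial>lborel)"
    by (rule lborel_pair.Fubini'[symmetric]) (simp add: f_def)
  also have "\<dots> = (\<integral>\<^sup>+u. ennreal (sqrt pi * (indicator {0..} u * u powr (s - 1/2 - 1) / exp u)) \<partial>lborel)"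
    unfolding f_def nn_integral_Gamma_Gauss_slice ..
  also have "\<dots> = ennreal (sqrt pi)
      * (\<integral>\<^sup>+u. ennreal (indicator {0..} u * u powr (s - 1/2 - 1) / exp u) \<partial>lborel)"
    by (subst nn_integral_cmult[symmetric]) (auto simp: ennreal_mult[symmetric] intro!: nn_integral_cong)
  also have "\<dots> = ennreal (sqrt pi) * ennreal (Gamma (s - 1/2))"
    using assms by (simp add: Gamma_conv_nn_integral_real)
  finally show ?thesis
    using Gamma_pos by (simp add: ennreal_mult[symmetric])
qed

section \<open>The univariate t distribution\<close>

lemma t_density_measurable [measurable]: "t_density \<nu> m s2 \<in> borel_measurable borel"
  unfolding t_density_def by measurable

lemma t_density_pos:
  assumes "\<nu> > 0" and "s2 > 0"
  shows "t_density \<nu> m s2 x > 0"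
proof -
  have "1 + (x - m)\<^sup>2 / (s2 * \<nu>) > 0"
    using assms by (simp add: add_pos_nonneg)
  then show ?thesis
    unfolding t_density_def using assms by (simp add: Gamma_real_pos)
qed

lemma t_density_nonneg: "\<nu> > 0 \<Longrightarrow> s2 > 0 \<Longrightarrow> t_density \<nu> m s2 x \<ge> 0"
  using t_density_pos less_imp_le by blast

lemma nn_integral_t_density:
  assumes "\<nu> > 0" and "s2 > 0"
  shows "(\<integral>\<^sup>+x. ennreal (t_density \<nu> m s2 x) \<partial>lborel) = 1"
proof -
  define c where "c = sqrt (s2 * \<nu>)"
  define K where "K = Gamma ((\<nu> + 1) / 2) / (sqrt (s2 * \<nu> * pi) * Gamma (\<nu> / 2))"
  have "c > 0" "K > 0" "Gamma (\<nu> / 2) > 0" "Gamma ((\<nu> + 1) / 2) > 0"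
    using assms by (simp_all add: c_def K_def Gamma_real_pos)
  have standardize: "t_density \<nu> m s2 (m + c * x) = K * (1 + x\<^sup>2) powr (- ((\<nu> + 1) / 2))" for x
    using assms by (simp add: t_density_def K_def c_def power_mult_distrib minus_divide_left)
  have "(\<integral>\<^sup>+x. ennreal (t_density \<nu> m s2 x) \<partial>lborel)
      = ennreal c * (\<integral>\<^sup>+x. ennreal (t_density \<nu> m s2 (m + c * x)) \<partial>lborel)"
    using \<open>c > 0\<close> by (subst nn_integral_real_affine[where t=m and c=c]) auto
  also have "\<dots> = ennreal c * (ennreal K * (\<integral>\<^sup>+x. ennreal ((1 + x\<^sup>2) powr (- ((\<nu> + 1) / 2))) \<partial>lborel))"
    using \<open>K > 0\<close> by (subst nn_integral_cmult[symmetric]) (auto simp: standardize ennreal_mult)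
  also have "(\<integral>\<^sup>+x. ennreal ((1 + x\<^sup>2) powr (- ((\<nu> + 1) / 2))) \<partial>lborel)
      = ennreal (sqrt pi * Gamma (\<nu> / 2) / Gamma ((\<nu> + 1) / 2))"
    using assms nn_integral_one_plus_square_powr[of "(\<nu> + 1) / 2"] by (simp add: add_divide_distrib)
  also have "ennreal c * (ennreal K * \<dots>) = ennreal (c * K * (sqrt pi * Gamma (\<nu> / 2) / Gamma ((\<nu> + 1) / 2)))"
    using \<open>c > 0\<close> \<open>K > 0\<close> \<open>Gamma (\<nu> / 2) > 0\<close> \<open>Gamma ((\<nu> + 1) / 2) > 0\<close>
    by (metis ennreal_mult mult.assoc less_imp_le divide_nonneg_pos mult_nonneg_nonneg
        real_sqrt_ge_zero pi_ge_zero)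
  also have "c * K * (sqrt pi * Gamma (\<nu> / 2) / Gamma ((\<nu> + 1) / 2)) = 1"
    using assms \<open>Gamma (\<nu> / 2) > 0\<close> \<open>Gamma ((\<nu> + 1) / 2) > 0\<close>
    by (simp add: K_def c_def real_sqrt_mult less_imp_neq[symmetric])
  finally show ?thesis
    by simp
qed

lemma has_bochner_integral_t_density:
  "\<nu> > 0 \<Longrightarrow> s2 > 0 \<Longrightarrow> has_bochner_integral lborel (t_density \<nu> m s2) 1"
  by (intro has_bochner_integral_nn_integral) (auto simp: t_density_nonneg nn_integral_t_density)

lemma prob_space_t_measure: "\<nu> > 0 \<Longrightarrow> s2 > 0 \<Longrightarrow> prob_space (t_measure \<nu> m s2)"
  unfolding t_measure_def by (rule prob_spaceI) (simp add: emeasure_density nn_integral_t_density)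

lemma sets_t_measure [simp, measurable_cong]: "sets (t_measure \<nu> m s2) = sets borel"
  by (simp add: t_measure_def)

lemma space_t_measure [simp]: "space (t_measure \<nu> m s2) = UNIV"
  by (simp add: t_measure_def)

lemma t_density_affine:
  assumes "\<sigma> > 0"
  shows "\<sigma> * t_density \<nu> \<mu> (\<sigma>\<^sup>2) (\<mu> + \<sigma> * z) = t_density \<nu> 0 1 z"
  using assms by (simp add: t_density_def real_sqrt_mult power_mult_distrib)

lemma t_measure_affine:
  assumes "\<nu> > 0" and "\<sigma> > 0"
  shows "t_measure \<nu> \<mu> (\<sigma>\<^sup>2) = distr (t_measure \<nu> 0 1) lborel (\<lambda>z. \<mu> + \<sigma> * z)"
proof (rule measure_eqI)
  fix A :: "real set"
  assume "A \<in> sets (t_measure \<nu> \<mu> (\<sigma>\<^sup>2))"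
  then have [measurable]: "A \<in> sets borel"
    by simp
  have "emeasure (t_measure \<nu> \<mu> (\<sigma>\<^sup>2)) A = (\<integral>\<^sup>+x. ennreal (t_density \<nu> \<mu> (\<sigma>\<^sup>2) x) * indicator A x \<partial>lborel)"
    by (simp add: t_measure_def emeasure_density)
  also have "\<dots> = ennreal \<sigma>
      * (\<integral>\<^sup>+z. ennreal (t_density \<nu> \<mu> (\<sigma>\<^sup>2) (\<mu> + \<sigma> * z)) * indicator A (\<mu> + \<sigma> * z) \<partial>lborel)"
    using assms by (subst nn_integral_real_affine[where t=\<mu> and c=\<sigma>]) auto
  also have "\<dots> = (\<integral>\<^sup>+z. ennreal (t_density \<nu> 0 1 z) * indicator A (\<mu> + \<sigma> * z) \<partial>lborel)"
  proof -
    have "ennreal (t_density \<nu> 0 1 z) = ennreal \<sigma> * ennreal (t_density \<nu> \<mu> (\<sigma>\<^sup>2) (\<mu> + \<sigma> * z))" for z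
      using assms t_density_affine[OF assms(2), of \<nu> \<mu> z]
      by (simp add: ennreal_mult[symmetric] t_density_nonneg)
    then show ?thesis
      by (simp add: nn_integral_cmult[symmetric] mult.assoc)
  qed
  also have "\<dots> = emeasure (distr (t_measure \<nu> 0 1) lborel (\<lambda>z. \<mu> + \<sigma> * z)) A"
    by (simp add: emeasure_distr t_measure_def emeasure_density vimage_def indicator_def)
  finally show "emeasure (t_measure \<nu> \<mu> (\<sigma>\<^sup>2)) A
      = emeasure (distr (t_measure \<nu> 0 1) lborel (\<lambda>z. \<mu> + \<sigma> * z)) A" .
qed simp

lemma distr_t_measure_reflect: "distr (t_measure \<nu> m s2) lborel (\<lambda>x. 2 * m - x) = t_measure \<nu> m s2"
proof (rule measure_eqI)
  fix A :: "real set"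
  assume "A \<in> sets (distr (t_measure \<nu> m s2) lborel (\<lambda>x. 2 * m - x))"
  then have [measurable]: "A \<in> sets borel"
    by simp
  have symmetric: "t_density \<nu> m s2 (2 * m - x) = t_density \<nu> m s2 x" for x
    by (simp add: t_density_def power2_commute)
  have "emeasure (t_measure \<nu> m s2) A = (\<integral>\<^sup>+x. ennreal (t_density \<nu> m s2 x) * indicator A x \<partial>lborel)"
    by (simp add: t_measure_def emeasure_density)
  also have "\<dots>
      = (\<integral>\<^sup>+z. ennreal (t_density \<nu> m s2 (2 * m + (-1) * z)) * indicator A (2 * m + (-1) * z) \<partial>lborel)"
    by (subst nn_integral_real_affine[where t="2 * m" and c="-1"]) auto
  also have "\<dots> = emeasure (distr (t_measure \<nu> m s2) lborel (\<lambda>x. 2 * m - x)) A"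
    using symmetric by (simp add: emeasure_distr t_measure_def emeasure_density vimage_def indicator_def)
  finally show "emeasure (distr (t_measure \<nu> m s2) lborel (\<lambda>x. 2 * m - x)) A
      = emeasure (t_measure \<nu> m s2) A"
    by simp
qed simp

lemma t_tail_prob:
  assumes "\<nu> > 0" and "s2 > 0"
  shows "(\<integral>z. t_density \<nu> m s2 z * indicator {a<..} z \<partial>lborel) = 1 - t_cdf \<nu> m s2 a"
proof -
  have "integrable lborel (t_density \<nu> m s2)"
    using has_bochner_integral_t_density[OF assms] by (rule integrable.intros)
  then have "(\<integral>z. t_density \<nu> m s2 z * indicator {a<..} z \<partial>lborel) + t_cdf \<nu> m s2 a
      = (\<integral>z. t_density \<nu> m s2 z * indicator {a<..} z + indicator {..a} z *\<^sub>R t_density \<nu> m s2 z \<partial>lborel)"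
    unfolding t_cdf_def set_lebesgue_integral_def
    by (intro Bochner_Integration.integral_add[symmetric] integrable_real_mult_indicator
        integrable_mult_indicator) auto
  also have "\<dots> = (\<integral>z. t_density \<nu> m s2 z \<partial>lborel)"
    by (intro Bochner_Integration.integral_cong) (auto simp: indicator_def)
  also have "\<dots> = 1"
    using has_bochner_integral_t_density[OF assms] by (rule has_bochner_integral_integral_eq)
  finally show ?thesis
    by simp
qed

section \<open>Tail moments of the t distribution\<close>

definition t_moment_antideriv :: "real \<Rightarrow> real \<Rightarrow> real" where
  "t_moment_antideriv \<nu> z =
     - (\<nu> / (\<nu> - 1)) * (Gamma ((\<nu> + 1) / 2) / (sqrt (\<nu> * pi) * Gamma (\<nu> / 2)))
     * (1 + z\<^sup>2 / \<nu>) powr (- (\<nu> - 1) / 2)"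

lemma t_moment_antideriv_has_real_derivative:
  assumes "\<nu> > 1"
  shows "(t_moment_antideriv \<nu> has_real_derivative z * t_density \<nu> 0 1 z) (at z)"
proof -
  define K where "K = Gamma ((\<nu> + 1) / 2) / (sqrt (\<nu> * pi) * Gamma (\<nu> / 2))"
  have exponent: "- (\<nu> - 1) / 2 - 1 = - (\<nu> + 1) / 2"
    by (simp add: field_simps)
  have "((\<lambda>z. (1 + z\<^sup>2 / \<nu>) powr (- (\<nu> - 1) / 2)) has_real_derivative
      - (\<nu> - 1) / 2 * (1 + z\<^sup>2 / \<nu>) powr (- (\<nu> - 1) / 2 - 1) * (2 * z / \<nu>)) (at z)"
    using assms by (auto intro!: derivative_eq_intros simp: add_pos_nonneg)
  then have "(t_moment_antideriv \<nu> has_real_derivative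
      - (\<nu> / (\<nu> - 1)) * K * (- (\<nu> - 1) / 2 * (1 + z\<^sup>2 / \<nu>) powr (- (\<nu> + 1) / 2) * (2 * z / \<nu>))) (at z)"
    unfolding t_moment_antideriv_def[abs_def] exponent K_def by (rule DERIV_cmult)
  moreover have "t_density \<nu> 0 1 z = K * (1 + z\<^sup>2 / \<nu>) powr (- (\<nu> + 1) / 2)"
    by (simp add: t_density_def K_def)
  then have "- (\<nu> / (\<nu> - 1)) * K * (- (\<nu> - 1) / 2 * (1 + z\<^sup>2 / \<nu>) powr (- (\<nu> + 1) / 2) * (2 * z / \<nu>))
      = z * t_density \<nu> 0 1 z"
    using assms by (simp add: field_simps)
  ultimately show ?thesis
    by (simp only:)
qed

lemma t_moment_antideriv_tendsto_0:
  assumes "\<nu> > 1"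
  shows "(t_moment_antideriv \<nu> \<longlongrightarrow> 0) at_top"
proof -
  have "LIM z at_top. 1 + z\<^sup>2 / \<nu> :> at_top"
    using assms by real_asymp
  then have "((\<lambda>z. (1 + z\<^sup>2 / \<nu>) powr (- (\<nu> - 1) / 2)) \<longlongrightarrow> 0) at_top"
    using assms by (intro tendsto_neg_powr) auto
  then show ?thesis
    unfolding t_moment_antideriv_def[abs_def] by (rule tendsto_mult_right_zero)
qed

lemma t_moment_antideriv_nonpos: "\<nu> > 1 \<Longrightarrow> t_moment_antideriv \<nu> z \<le> 0"
  unfolding t_moment_antideriv_def by (simp add: Gamma_real_pos mult_nonneg_nonneg)

lemma t_moment_antideriv_eq_t_density:
  assumes "\<nu> > 2"
  shows "- t_moment_antideriv \<nu> z = \<nu> / (\<nu> - 2) * t_density (\<nu> - 2) 0 (\<nu> / (\<nu> - 2)) z"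
proof -
  define P where "P = (1 + z\<^sup>2 / \<nu>) powr (- (\<nu> - 1) / 2)"
  have "\<nu> / (\<nu> - 2) * (\<nu> - 2) = \<nu>" and "\<nu> - 2 + 1 = \<nu> - 1"
    using assms by simp_all
  then have t_density_eq: "t_density (\<nu> - 2) 0 (\<nu> / (\<nu> - 2)) z
      = Gamma ((\<nu> - 1) / 2) / (sqrt (\<nu> * pi) * Gamma ((\<nu> - 2) / 2)) * P"
    unfolding t_density_def P_def by (simp only: diff_zero minus_divide_left mult.assoc)
  have "(\<nu> + 1) / 2 = (\<nu> - 1) / 2 + 1" and "\<nu> / 2 = (\<nu> - 2) / 2 + 1"
    by (simp_all add: field_simps)
  then have Gamma_rec: "Gamma ((\<nu> + 1) / 2) = (\<nu> - 1) / 2 * Gamma ((\<nu> - 1) / 2)"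
    "Gamma (\<nu> / 2) = (\<nu> - 2) / 2 * Gamma ((\<nu> - 2) / 2)"
    using assms by (simp_all only:) (simp_all add: Gamma_plus1 nonpos_Ints_def)
  have "Gamma ((\<nu> - 2) / 2) > 0"
    using assms by (simp add: Gamma_real_pos)
  then show ?thesis
    using assms unfolding t_moment_antideriv_def t_density_eq P_def[symmetric] Gamma_rec
    by (simp add: divide_simps)
qed

lemma nn_integral_t_tail_moment:
  assumes "\<nu> > 1" and "a \<ge> 0"
  shows "(\<integral>\<^sup>+z. ennreal (z * t_density \<nu> 0 1 z) * indicator {a..} z \<partial>lborel)
         = ennreal (- t_moment_antideriv \<nu> a)"
  using assms
  by (subst nn_integral_FTC_atLeast[where F="t_moment_antideriv \<nu>" and T=0])
     (auto intro!: t_moment_antideriv_has_real_derivative t_moment_antideriv_tendsto_0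
       mult_nonneg_nonneg t_density_nonneg)

lemma has_bochner_integral_t_tail_moment:
  assumes "\<nu> > 1" and "a \<ge> 0"
  shows "has_bochner_integral lborel (\<lambda>z. t_density \<nu> 0 1 z * z * indicator {a<..} z)
           (- t_moment_antideriv \<nu> a)"
proof (rule has_bochner_integral_nn_integral)
  have "AE z in lborel. ennreal (t_density \<nu> 0 1 z * z * indicator {a<..} z)
      = ennreal (z * t_density \<nu> 0 1 z) * indicator {a..} z"
    using AE_lborel_singleton[of a] by eventually_elim (auto simp: indicator_def mult.commute)
  then show "(\<integral>\<^sup>+z. ennreal (t_density \<nu> 0 1 z * z * indicator {a<..} z) \<partial>lborel)
      = ennreal (- t_moment_antideriv \<nu> a)"
    using assms by (simp add: nn_integral_cong_AE nn_integral_t_tail_moment)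
qed (use assms in \<open>auto simp: t_moment_antideriv_nonpos t_density_nonneg indicator_def\<close>)

lemma integrable_t_std_moment:
  assumes "\<nu> > 1"
  shows "integrable lborel (\<lambda>z. t_density \<nu> 0 1 z * z)"
proof -
  define g where "g z = t_density \<nu> 0 1 z * z * indicator {0<..} z" for z
  have "integrable lborel g"
    unfolding g_def using has_bochner_integral_t_tail_moment[OF assms order_refl]
    by (rule integrable.intros)
  moreover from this have "integrable lborel (\<lambda>z. g (0 + (-1) * z))"
    by (rule lborel_integrable_real_affine) simp
  ultimately have "integrable lborel (\<lambda>z. g z - g (0 + (-1) * z))"
    by (rule Bochner_Integration.integrable_diff)
  moreover have "g z - g (0 + (-1) * z) = t_density \<nu> 0 1 z * z" for z
    by (auto simp: g_def t_density_def indicator_def)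
  ultimately show ?thesis
    by simp
qed

lemma integrable_t_measure_id:
  assumes "\<nu> > 1" and "\<sigma> > 0"
  shows "integrable (t_measure \<nu> \<mu> (\<sigma>\<^sup>2)) (\<lambda>x. x)"
proof -
  have "integrable lborel (t_density \<nu> 0 1)"
    using assms has_bochner_integral_t_density[of \<nu> 1 0] by (auto intro: integrable.intros)
  then have "integrable lborel (\<lambda>z. \<mu> * t_density \<nu> 0 1 z + \<sigma> * (t_density \<nu> 0 1 z * z))"
    using integrable_t_std_moment[OF assms(1)]
    by (intro Bochner_Integration.integrable_add integrable_mult_right)
  moreover have "(\<lambda>z. t_density \<nu> 0 1 z *\<^sub>R (\<mu> + \<sigma> * z))
      = (\<lambda>z. \<mu> * t_density \<nu> 0 1 z + \<sigma> * (t_density \<nu> 0 1 z * z))"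
    by (simp add: fun_eq_iff algebra_simps)
  ultimately have "integrable lborel (\<lambda>z. t_density \<nu> 0 1 z *\<^sub>R (\<mu> + \<sigma> * z))"
    by (simp only:)
  then have "integrable (t_measure \<nu> 0 1) (\<lambda>z. \<mu> + \<sigma> * z)"
    unfolding t_measure_def using assms by (subst integrable_density) (auto simp: t_density_nonneg)
  then show ?thesis
    using assms by (simp add: t_measure_affine integrable_distr_eq)
qed

lemma integral_t_measure_truncated_affine:
  assumes "\<nu> > 2" and "\<sigma> > 0" and "\<mu> \<le> 0"
  defines "\<alpha> \<equiv> - \<mu> / \<sigma>"
  shows "(\<integral>x. (c + b * (x - \<mu>)) * indicator {0<..} x \<partial>t_measure \<nu> \<mu> (\<sigma>\<^sup>2))
         = c * (1 - t_cdf \<nu> 0 1 \<alpha>) + b * \<sigma> * (\<nu> / (\<nu> - 2) * t_density (\<nu> - 2) 0 (\<nu> / (\<nu> - 2)) \<alpha>)"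
proof -
  have "\<alpha> \<ge> 0"
    using assms by (simp add: \<alpha>_def divide_nonpos_pos)
  have indicator_shift: "indicator {0<..} (\<mu> + \<sigma> * z) = (indicator {\<alpha><..} z :: real)" for z
    using assms by (simp add: \<alpha>_def indicator_def field_simps)
  have tail_prob: "has_bochner_integral lborel (\<lambda>z. t_density \<nu> 0 1 z * indicator {\<alpha><..} z)
      (1 - t_cdf \<nu> 0 1 \<alpha>)"
    using assms t_tail_prob[of \<nu> 1 0 \<alpha>] has_bochner_integral_t_density[of \<nu> 1 0]
    by (simp add: has_bochner_integral_iff integrable_real_mult_indicator)
  have tail_moment: "has_bochner_integral lborel (\<lambda>z. t_density \<nu> 0 1 z * z * indicator {\<alpha><..} z)
      (\<nu> / (\<nu> - 2) * t_density (\<nu> - 2) 0 (\<nu> / (\<nu> - 2)) \<alpha>)"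
    using assms \<open>\<alpha> \<ge> 0\<close> has_bochner_integral_t_tail_moment[of \<nu> \<alpha>]
    by (simp add: t_moment_antideriv_eq_t_density)
  have "(\<integral>x. (c + b * (x - \<mu>)) * indicator {0<..} x \<partial>t_measure \<nu> \<mu> (\<sigma>\<^sup>2))
      = (\<integral>z. (c + b * (\<sigma> * z)) * indicator {0<..} (\<mu> + \<sigma> * z) \<partial>t_measure \<nu> 0 1)"
    using assms by (simp add: t_measure_affine integral_distr)
  also have "\<dots> = (\<integral>z. t_density \<nu> 0 1 z *\<^sub>R ((c + b * (\<sigma> * z)) * indicator {0<..} (\<mu> + \<sigma> * z)) \<partial>lborel)"
    unfolding t_measure_def using assms by (subst integral_density) (auto simp: t_density_nonneg)
  also have "\<dots> = (\<integral>z. c * (t_density \<nu> 0 1 z * indicator {\<alpha><..} z)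
                      + (b * \<sigma>) * (t_density \<nu> 0 1 z * z * indicator {\<alpha><..} z) \<partial>lborel)"
    unfolding indicator_shift by (simp add: algebra_simps)
  also have "\<dots> = c * (1 - t_cdf \<nu> 0 1 \<alpha>) + b * \<sigma> * (\<nu> / (\<nu> - 2) * t_density (\<nu> - 2) 0 (\<nu> / (\<nu> - 2)) \<alpha>)"
    using tail_prob tail_moment
    by (intro has_bochner_integral_integral_eq has_bochner_integral_add has_bochner_integral_mult_right)
  finally show ?thesis .
qed

lemma integral_t_measure_truncated_neg:
  assumes "\<nu> > 2" and "\<sigma> > 0" and "\<mu> < 0"
    and "b < 2 * (- \<mu> / \<sigma>) * W_fun \<nu> (- \<mu> / \<sigma>)"
  shows "(\<integral>x. (2 * \<mu> + b * (x - \<mu>)) * indicator {0<..} x \<partial>t_measure \<nu> \<mu> (\<sigma>\<^sup>2)) < 0"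
proof -
  define \<alpha> where "\<alpha> = - \<mu> / \<sigma>"
  define P where "P = 1 - t_cdf \<nu> 0 1 \<alpha>"
  define T where "T = t_density (\<nu> - 2) 0 (\<nu> / (\<nu> - 2)) \<alpha>"
  have "T > 0"
    using assms by (simp add: T_def t_density_pos)
  then have "\<sigma> * (\<nu> / (\<nu> - 2) * T) > 0"
    using assms by simp
  then have "b * (\<sigma> * (\<nu> / (\<nu> - 2) * T)) < 2 * \<alpha> * W_fun \<nu> \<alpha> * (\<sigma> * (\<nu> / (\<nu> - 2) * T))"
    using assms(4) unfolding \<alpha>_def by (rule mult_strict_right_mono[rotated])
  also have "\<dots> = - 2 * \<mu> * P"
    using assms \<open>T > 0\<close> by (simp add: W_fun_def \<alpha>_def P_def T_def)
  finally show ?thesis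
    using assms by (simp add: integral_t_measure_truncated_affine P_def T_def \<alpha>_def mult.assoc)
qed

section \<open>The bivariate t distribution\<close>

lemma bivt_density_measurable [measurable]: "bivt_density \<mu> \<sigma> \<rho> \<delta> \<in> borel_measurable borel"
proof -
  have "(\<lambda>xy. (fst xy - \<mu>)\<^sup>2 - 2 * \<rho> * (fst xy - \<mu>) * (snd xy - \<mu>) + (snd xy - \<mu>)\<^sup>2 :: real)
      \<in> borel_measurable borel"
    by (intro borel_measurable_continuous_onI continuous_intros)
  moreover have "(\<lambda>q. Gamma ((\<delta> + 2) / 2) / (Gamma (\<delta> / 2) * \<delta> * pi * \<sigma>\<^sup>2 * sqrt (1 - \<rho>\<^sup>2))
      * (1 + q / (\<sigma>\<^sup>2 * (1 - \<rho>\<^sup>2)) / \<delta>) powr (- (\<delta> + 2) / 2)) \<in> borel_measurable borel"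
    by measurable
  ultimately show ?thesis
    unfolding bivt_density_def[abs_def] Let_def by (rule measurable_compose)
qed

lemma bivt_density_nonneg:
  assumes "\<delta> > 0" and "-1 \<le> \<rho>" and "\<rho> \<le> 1"
  shows "bivt_density \<mu> \<sigma> \<rho> \<delta> p \<ge> 0"
  using assms by (simp add: bivt_density_def Let_def Gamma_real_pos abs_square_le_1)

lemma bivt_density_swap: "bivt_density \<mu> \<sigma> \<rho> \<delta> (y, x) = bivt_density \<mu> \<sigma> \<rho> \<delta> (x, y)"
  unfolding bivt_density_def Let_def by (simp add: algebra_simps)

text \<open>The point 2 mu + 2 rho (x - mu) - y is the mirror image of y in mu + rho (x - mu), the
  conditional mean of V given U = x.\<close>
lemma bivt_density_reflect:
  "bivt_density \<mu> \<sigma> \<rho> \<delta> (x, 2 * \<mu> + 2 * \<rho> * (x - \<mu>) - y) = bivt_density \<mu> \<sigma> \<rho> \<delta> (x, y)"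
proof -
  have "(x - \<mu>)\<^sup>2 - 2 * \<rho> * (x - \<mu>) * (2 * \<mu> + 2 * \<rho> * (x - \<mu>) - y - \<mu>)
        + (2 * \<mu> + 2 * \<rho> * (x - \<mu>) - y - \<mu>)\<^sup>2
      = (x - \<mu>)\<^sup>2 - 2 * \<rho> * (x - \<mu>) * (y - \<mu>) + (y - \<mu>)\<^sup>2"
    by (simp add: power2_eq_square algebra_simps)
  then show ?thesis
    unfolding bivt_density_def Let_def fst_conv snd_conv by (simp only:)
qed

lemma bivt_density_complete_square:
  fixes \<mu> \<sigma> \<rho> \<delta> x w :: real
  assumes "\<delta> > 0" and "\<sigma> > 0" and "-1 < \<rho>" and "\<rho> < 1"
  defines "P \<equiv> 1 + (x - \<mu>)\<^sup>2 / (\<sigma>\<^sup>2 * \<delta>)"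
  defines "L \<equiv> \<sigma> * sqrt ((1 - \<rho>\<^sup>2) * \<delta> * P)"
  shows "bivt_density \<mu> \<sigma> \<rho> \<delta> (x, \<mu> + \<rho> * (x - \<mu>) + L * w)
       = Gamma ((\<delta> + 2) / 2) / (Gamma (\<delta> / 2) * \<delta> * pi * \<sigma>\<^sup>2 * sqrt (1 - \<rho>\<^sup>2))
         * P powr (- (\<delta> + 2) / 2) * (1 + w\<^sup>2) powr (- (\<delta> + 2) / 2)"
proof -
  have "1 - \<rho>\<^sup>2 > 0"
    using assms by (simp add: abs_square_less_1)
  have "P > 0"
    using assms by (simp add: P_def add_pos_nonneg)
  have square: "(x - \<mu>)\<^sup>2 - 2 * \<rho> * (x - \<mu>) * (\<mu> + \<rho> * (x - \<mu>) + L * w - \<mu>)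
        + (\<mu> + \<rho> * (x - \<mu>) + L * w - \<mu>)\<^sup>2
      = (1 - \<rho>\<^sup>2) * (x - \<mu>)\<^sup>2 + L\<^sup>2 * w\<^sup>2"
    by (simp add: power2_eq_square algebra_simps)
  have L2: "L\<^sup>2 = \<sigma>\<^sup>2 * (1 - \<rho>\<^sup>2) * \<delta> * P"
    using \<open>1 - \<rho>\<^sup>2 > 0\<close> \<open>P > 0\<close> assms by (simp add: L_def power_mult_distrib)
  have "1 + ((1 - \<rho>\<^sup>2) * (x - \<mu>)\<^sup>2 + L\<^sup>2 * w\<^sup>2) / (\<sigma>\<^sup>2 * (1 - \<rho>\<^sup>2)) / \<delta>
      = 1 + (x - \<mu>)\<^sup>2 / (\<sigma>\<^sup>2 * \<delta>) + P * w\<^sup>2"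
    using assms \<open>1 - \<rho>\<^sup>2 > 0\<close> unfolding L2 by (simp add: field_simps)
  also have "\<dots> = P * (1 + w\<^sup>2)"
    by (simp add: P_def algebra_simps add_divide_distrib)
  finally show ?thesis
    using \<open>P > 0\<close> unfolding bivt_density_def Let_def fst_conv snd_conv square
    by (simp add: powr_mult)
qed

lemma bivt_normalization_marginal:
  fixes \<mu> \<sigma> \<rho> \<delta> x :: real
  assumes "\<delta> > 0" and "\<sigma> > 0" and "-1 < \<rho>" and "\<rho> < 1"
  defines "P \<equiv> 1 + (x - \<mu>)\<^sup>2 / (\<sigma>\<^sup>2 * \<delta>)"
  shows "\<sigma> * sqrt ((1 - \<rho>\<^sup>2) * \<delta> * P)
           * (Gamma ((\<delta> + 2) / 2) / (Gamma (\<delta> / 2) * \<delta> * pi * \<sigma>\<^sup>2 * sqrt (1 - \<rho>\<^sup>2))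
              * P powr (- (\<delta> + 2) / 2))
           * (sqrt pi * Gamma ((\<delta> + 1) / 2) / Gamma ((\<delta> + 2) / 2))
         = t_density \<delta> \<mu> (\<sigma>\<^sup>2) x"
proof -
  have "1 - \<rho>\<^sup>2 > 0"
    using assms by (simp add: abs_square_less_1)
  have "P > 0"
    using assms by (simp add: P_def add_pos_nonneg)
  then have sqrt_P: "sqrt P * P powr (- (\<delta> + 2) / 2) = P powr (- (\<delta> + 1) / 2)"
    by (simp add: powr_half_sqrt[symmetric] powr_add[symmetric] field_simps)
  have "Gamma (\<delta> / 2) \<noteq> 0" "Gamma ((\<delta> + 2) / 2) \<noteq> 0" "sqrt (1 - \<rho>\<^sup>2) \<noteq> 0"
    using assms \<open>1 - \<rho>\<^sup>2 > 0\<close> by (simp_all add: Gamma_real_pos less_imp_neq[symmetric])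
  moreover have "sqrt \<delta> * (sqrt \<delta> * y) = \<delta> * y" "sqrt pi * (sqrt pi * y) = pi * y" for y
    using assms by (simp_all add: mult.assoc[symmetric])
  moreover have "sqrt ((1 - \<rho>\<^sup>2) * \<delta>) = sqrt (1 - \<rho>\<^sup>2) * sqrt \<delta>"
    and "sqrt (\<sigma>\<^sup>2 * \<delta> * pi) = \<sigma> * (sqrt \<delta> * sqrt pi)"
    using assms by (simp_all add: real_sqrt_mult)
  ultimately have const: "\<sigma> * sqrt ((1 - \<rho>\<^sup>2) * \<delta>)
      * (Gamma ((\<delta> + 2) / 2) / (Gamma (\<delta> / 2) * \<delta> * pi * \<sigma>\<^sup>2 * sqrt (1 - \<rho>\<^sup>2)))
      * (sqrt pi * Gamma ((\<delta> + 1) / 2) / Gamma ((\<delta> + 2) / 2))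
      = Gamma ((\<delta> + 1) / 2) / (sqrt (\<sigma>\<^sup>2 * \<delta> * pi) * Gamma (\<delta> / 2))"
    using assms \<open>1 - \<rho>\<^sup>2 > 0\<close> by (simp add: field_simps power2_eq_square)
  have "\<sigma> * sqrt ((1 - \<rho>\<^sup>2) * \<delta> * P)
           * (Gamma ((\<delta> + 2) / 2) / (Gamma (\<delta> / 2) * \<delta> * pi * \<sigma>\<^sup>2 * sqrt (1 - \<rho>\<^sup>2))
              * P powr (- (\<delta> + 2) / 2))
           * (sqrt pi * Gamma ((\<delta> + 1) / 2) / Gamma ((\<delta> + 2) / 2))
      = (\<sigma> * sqrt ((1 - \<rho>\<^sup>2) * \<delta>)
          * (Gamma ((\<delta> + 2) / 2) / (Gamma (\<delta> / 2) * \<delta> * pi * \<sigma>\<^sup>2 * sqrt (1 - \<rho>\<^sup>2)))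
          * (sqrt pi * Gamma ((\<delta> + 1) / 2) / Gamma ((\<delta> + 2) / 2)))
        * (sqrt P * P powr (- (\<delta> + 2) / 2))"
    by (simp add: real_sqrt_mult mult_ac)
  also have "\<dots> = t_density \<delta> \<mu> (\<sigma>\<^sup>2) x"
    unfolding const sqrt_P by (simp add: t_density_def P_def)
  finally show ?thesis .
qed

lemma nn_integral_bivt_density_snd:
  assumes "\<delta> > 0" and "\<sigma> > 0" and "-1 < \<rho>" and "\<rho> < 1"
  shows "(\<integral>\<^sup>+y. ennreal (bivt_density \<mu> \<sigma> \<rho> \<delta> (x, y)) \<partial>lborel) = ennreal (t_density \<delta> \<mu> (\<sigma>\<^sup>2) x)"
proof -
  have "1 - \<rho>\<^sup>2 > 0"
    using assms by (simp add: abs_square_less_1)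
  define K where "K = Gamma ((\<delta> + 2) / 2) / (Gamma (\<delta> / 2) * \<delta> * pi * \<sigma>\<^sup>2 * sqrt (1 - \<rho>\<^sup>2))"
  define J where "J = sqrt pi * Gamma ((\<delta> + 1) / 2) / Gamma ((\<delta> + 2) / 2)"
  define P where "P = 1 + (x - \<mu>)\<^sup>2 / (\<sigma>\<^sup>2 * \<delta>)"
  define L where "L = \<sigma> * sqrt ((1 - \<rho>\<^sup>2) * \<delta> * P)"
  have "P > 0" "K > 0" "J > 0"
    using assms \<open>1 - \<rho>\<^sup>2 > 0\<close> by (simp_all add: P_def K_def J_def add_pos_nonneg Gamma_real_pos)
  then have "L > 0"
    using assms \<open>1 - \<rho>\<^sup>2 > 0\<close> by (simp add: L_def)
  have J: "(\<integral>\<^sup>+w. ennreal ((1 + w\<^sup>2) powr (- (\<delta> + 2) / 2)) \<partial>lborel) = ennreal J"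
  proof -
    have "(\<delta> + 2) / 2 - 1/2 = (\<delta> + 1) / 2"
      by (simp add: field_simps)
    from nn_integral_one_plus_square_powr[of "(\<delta> + 2) / 2", unfolded this] show ?thesis
      using assms by (simp add: J_def minus_divide_left)
  qed
  have "(\<integral>\<^sup>+y. ennreal (bivt_density \<mu> \<sigma> \<rho> \<delta> (x, y)) \<partial>lborel)
      = ennreal L * (\<integral>\<^sup>+w. ennreal (bivt_density \<mu> \<sigma> \<rho> \<delta> (x, \<mu> + \<rho> * (x - \<mu>) + L * w)) \<partial>lborel)"
    using \<open>L > 0\<close> by (subst nn_integral_real_affine[where t="\<mu> + \<rho> * (x - \<mu>)" and c=L]) auto
  also have "\<dots> = ennreal L * (ennreal (K * P powr (- (\<delta> + 2) / 2)) * ennreal J)"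
  proof -
    have "ennreal (bivt_density \<mu> \<sigma> \<rho> \<delta> (x, \<mu> + \<rho> * (x - \<mu>) + L * w))
        = ennreal (K * P powr (- (\<delta> + 2) / 2)) * ennreal ((1 + w\<^sup>2) powr (- (\<delta> + 2) / 2))" for w
    proof -
      have "bivt_density \<mu> \<sigma> \<rho> \<delta> (x, \<mu> + \<rho> * (x - \<mu>) + L * w)
          = K * P powr (- (\<delta> + 2) / 2) * (1 + w\<^sup>2) powr (- (\<delta> + 2) / 2)"
        unfolding L_def P_def K_def by (rule bivt_density_complete_square[OF assms])
      then show ?thesis
        using \<open>K > 0\<close> by (simp only:) (rule ennreal_mult; simp)
    qed
    then show ?thesis
      by (simp only:) (subst nn_integral_cmult, measurable, simp only: J)
  qed
  also have "\<dots> = ennreal (L * (K * P powr (- (\<delta> + 2) / 2)) * J)"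
    using \<open>L > 0\<close> \<open>K > 0\<close> \<open>J > 0\<close> by (simp add: ennreal_mult mult.assoc)
  also have "L * (K * P powr (- (\<delta> + 2) / 2)) * J = t_density \<delta> \<mu> (\<sigma>\<^sup>2) x"
    unfolding L_def K_def J_def P_def by (rule bivt_normalization_marginal[OF assms])
  finally show ?thesis .
qed

lemma sets_bivt_measure [simp, measurable_cong]: "sets (bivt_measure \<mu> \<sigma> \<rho> \<delta>) = sets borel"
  by (simp add: bivt_measure_def)

lemma space_bivt_measure [simp]: "space (bivt_measure \<mu> \<sigma> \<rho> \<delta>) = UNIV"
  by (simp add: bivt_measure_def)

lemma measurable_bivt_measure [simp]: "measurable (bivt_measure \<mu> \<sigma> \<rho> \<delta>) N = measurable borel N"
  by (rule measurable_cong_sets) simp_all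

lemma bivt_measure_swap: "distr (bivt_measure \<mu> \<sigma> \<rho> \<delta>) lborel (\<lambda>(x, y). (y, x)) = bivt_measure \<mu> \<sigma> \<rho> \<delta>"
proof -
  let ?T = "t_measure \<delta> \<mu> (\<sigma>\<^sup>2)"
  have "distr (distr ?T lborel (\<lambda>x. (x, 2 * \<mu> - x))) lborel (\<lambda>(x, y). (y, x))
      = distr (distr ?T lborel (\<lambda>x. 2 * \<mu> - x)) lborel (\<lambda>x. (x, 2 * \<mu> - x))"
    by (subst (1 2) distr_distr) (auto simp: comp_def)
  moreover have "distr (distr ?T lborel (\<lambda>x. (x, x))) lborel (\<lambda>(x, y). (y, x))
      = distr ?T lborel (\<lambda>x. (x, x))"
    by (subst distr_distr) (auto simp: comp_def)
  moreover have "distr (density lborel (\<lambda>xy. ennreal (bivt_density \<mu> \<sigma> \<rho> \<delta> xy))) lborel (\<lambda>(x, y). (y, x))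
      = density lborel (\<lambda>xy. ennreal (bivt_density \<mu> \<sigma> \<rho> \<delta> xy))"
    using density_distr[of "\<lambda>xy. ennreal (bivt_density \<mu> \<sigma> \<rho> \<delta> xy)" lborel "\<lambda>(x, y). (y, x)" lborel]
    by (simp add: distr_lborel_swap case_prod_beta bivt_density_swap)
  ultimately show ?thesis
    by (simp add: bivt_measure_def distr_t_measure_reflect)
qed

lemma integral_bivt_measure_swap:
  fixes h :: "real \<times> real \<Rightarrow> 'a::{banach, second_countable_topology}"
  assumes [measurable]: "h \<in> borel_measurable borel"
  shows "(\<integral>p. h (snd p, fst p) \<partial>bivt_measure \<mu> \<sigma> \<rho> \<delta>) = integral\<^sup>L (bivt_measure \<mu> \<sigma> \<rho> \<delta>) h"
  using integral_distr[of "\<lambda>(x, y). (y, x)" "bivt_measure \<mu> \<sigma> \<rho> \<delta>" lborel h]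
  by (simp add: bivt_measure_swap case_prod_beta)

lemma distr_bivt_density_fst:
  assumes "\<delta> > 0" and "\<sigma> > 0" and "-1 < \<rho>" and "\<rho> < 1"
  shows "distr (density lborel (\<lambda>xy. ennreal (bivt_density \<mu> \<sigma> \<rho> \<delta> xy))) lborel fst = t_measure \<delta> \<mu> (\<sigma>\<^sup>2)"
    (is "distr ?D lborel fst = _")
proof (rule measure_eqI)
  fix A :: "real set"
  assume "A \<in> sets (distr ?D lborel fst)"
  then have [measurable]: "A \<in> sets borel"
    by simp
  have "emeasure (distr ?D lborel fst) A
      = (\<integral>\<^sup>+p. ennreal (bivt_density \<mu> \<sigma> \<rho> \<delta> p) * indicator A (fst p) \<partial>(lborel \<Otimes>\<^sub>M lborel))"
    using measurable_sets[OF borel_measurable_fst, of A]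
    by (subst emeasure_distr, simp, simp, subst emeasure_density)
      (auto simp: lborel_prod intro!: nn_integral_cong split: split_indicator)
  also have "\<dots> = (\<integral>\<^sup>+x. (\<integral>\<^sup>+y. ennreal (bivt_density \<mu> \<sigma> \<rho> \<delta> (x, y)) \<partial>lborel) * indicator A x \<partial>lborel)"
  proof -
    have "(\<lambda>p. ennreal (bivt_density \<mu> \<sigma> \<rho> \<delta> p) * indicator A (fst p)) \<in> borel_measurable (lborel \<Otimes>\<^sub>M lborel)"
      unfolding lborel_prod by measurable
    then show ?thesis
      by (subst lborel.nn_integral_fst[symmetric]) (auto simp: nn_integral_multc)
  qed
  also have "\<dots> = emeasure (t_measure \<delta> \<mu> (\<sigma>\<^sup>2)) A"
    using assms by (simp add: nn_integral_bivt_density_snd t_measure_def emeasure_density)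
  finally show "emeasure (distr ?D lborel fst) A = emeasure (t_measure \<delta> \<mu> (\<sigma>\<^sup>2)) A" .
qed simp

lemma distr_bivt_measure_fst:
  assumes "\<delta> > 0" and "\<sigma> > 0" and "-1 \<le> \<rho>" and "\<rho> \<le> 1"
  shows "distr (bivt_measure \<mu> \<sigma> \<rho> \<delta>) lborel fst = t_measure \<delta> \<mu> (\<sigma>\<^sup>2)"
proof -
  have "distr (distr (t_measure \<delta> \<mu> (\<sigma>\<^sup>2)) lborel (\<lambda>x. (x, \<phi> x))) lborel fst = t_measure \<delta> \<mu> (\<sigma>\<^sup>2)"
    if [measurable]: "\<phi> \<in> borel_measurable borel" for \<phi> :: "real \<Rightarrow> real"
    by (subst distr_distr) (auto simp: comp_def distr_id2)
  then show ?thesis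
    using assms by (auto simp: bivt_measure_def distr_bivt_density_fst)
qed

lemma distr_bivt_measure_snd:
  assumes "\<delta> > 0" and "\<sigma> > 0" and "-1 \<le> \<rho>" and "\<rho> \<le> 1"
  shows "distr (bivt_measure \<mu> \<sigma> \<rho> \<delta>) lborel snd = t_measure \<delta> \<mu> (\<sigma>\<^sup>2)"
proof -
  have "distr (bivt_measure \<mu> \<sigma> \<rho> \<delta>) lborel snd
      = distr (distr (bivt_measure \<mu> \<sigma> \<rho> \<delta>) lborel (\<lambda>(x, y). (y, x))) lborel fst"
    by (subst distr_distr) (auto simp: comp_def case_prod_beta)
  then show ?thesis
    using assms by (simp add: bivt_measure_swap distr_bivt_measure_fst)
qed

lemma prob_space_bivt_measure:
  assumes "\<delta> > 0" and "\<sigma> > 0" and "-1 \<le> \<rho>" and "\<rho> \<le> 1"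
  shows "prob_space (bivt_measure \<mu> \<sigma> \<rho> \<delta>)"
proof
  have "emeasure (bivt_measure \<mu> \<sigma> \<rho> \<delta>) UNIV = emeasure (distr (bivt_measure \<mu> \<sigma> \<rho> \<delta>) lborel fst) UNIV"
    by (subst emeasure_distr) simp_all
  also have "\<dots> = 1"
    using assms prob_space_t_measure[of \<delta> "\<sigma>\<^sup>2" \<mu>]
    by (simp add: distr_bivt_measure_fst
        prob_space.emeasure_space_1[where M="t_measure _ _ _", simplified])
  finally show "emeasure (bivt_measure \<mu> \<sigma> \<rho> \<delta>) (space (bivt_measure \<mu> \<sigma> \<rho> \<delta>)) = 1"
    by simp
qed

lemma integral_bivt_measure_residual:
  assumes "\<delta> > 0" and "-1 \<le> \<rho>" and "\<rho> \<le> 1" and [measurable]: "S \<in> sets borel"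
  shows "(\<integral>p. (snd p - \<mu> - \<rho> * (fst p - \<mu>)) * indicator S (fst p) \<partial>bivt_measure \<mu> \<sigma> \<rho> \<delta>) = 0"
proof -
  define g where "g p = (snd p - \<mu> - \<rho> * (fst p - \<mu>)) * indicator S (fst p)" for p :: "real \<times> real"
  have [measurable]: "g \<in> borel_measurable borel"
    unfolding g_def by measurable
  have "(\<integral>p. g p \<partial>distr (t_measure \<delta> \<mu> (\<sigma>\<^sup>2)) lborel (\<lambda>x. (x, \<phi> x))) = 0"
    if [measurable]: "\<phi> \<in> borel_measurable borel" and "\<And>x. \<phi> x - \<mu> - \<rho> * (x - \<mu>) = 0"
    for \<phi> :: "real \<Rightarrow> real"
    using that(2) by (subst integral_distr) (auto simp: g_def)
  moreover have "(\<integral>p. g p \<partial>density lborel (\<lambda>xy. ennreal (bivt_density \<mu> \<sigma> \<rho> \<delta> xy))) = 0"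
  proof -
    let ?R = "\<lambda>(x, y). (x, 2 * \<mu> + 2 * \<rho> * (x - \<mu>) - y)"
    have "(\<integral>p. g p \<partial>density lborel (\<lambda>xy. ennreal (bivt_density \<mu> \<sigma> \<rho> \<delta> xy)))
        = (\<integral>p. bivt_density \<mu> \<sigma> \<rho> \<delta> p * g p \<partial>lborel)"
      using assms by (subst integral_density) (auto simp: bivt_density_nonneg)
    also have "\<dots> = 0"
    proof (rule integral_eq_zero_if_odd)
      show "?R \<in> lborel \<rightarrow>\<^sub>M lborel"
        unfolding case_prod_beta by simp
      show "distr lborel lborel ?R = lborel"
        using distr_lborel_reflect_snd[of "\<lambda>x. 2 * \<mu> + 2 * \<rho> * (x - \<mu>)"] by simp
      show "(\<lambda>p. bivt_density \<mu> \<sigma> \<rho> \<delta> p * g p) \<in> borel_measurable lborel"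
        by simp
      show "bivt_density \<mu> \<sigma> \<rho> \<delta> (?R p) * g (?R p) = - (bivt_density \<mu> \<sigma> \<rho> \<delta> p * g p)" for p
        by (cases p)
          (simp only: prod.case fst_conv snd_conv bivt_density_reflect g_def, simp add: algebra_simps)
    qed
    finally show ?thesis .
  qed
  ultimately show ?thesis
    using assms unfolding g_def[symmetric] by (auto simp: bivt_measure_def)
qed

lemma integrable_bivt_measure_marginals:
  fixes F :: "real \<Rightarrow> real"
  assumes "\<delta> > 0" and "\<sigma> > 0" and "-1 \<le> \<rho>" and "\<rho> \<le> 1"
    and "F \<in> borel_measurable borel" and "integrable (t_measure \<delta> \<mu> (\<sigma>\<^sup>2)) F"
  shows "integrable (bivt_measure \<mu> \<sigma> \<rho> \<delta>) (\<lambda>p. F (fst p))"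
    and "integrable (bivt_measure \<mu> \<sigma> \<rho> \<delta>) (\<lambda>p. F (snd p))"
proof -
  have "fst \<in> measurable (bivt_measure \<mu> \<sigma> \<rho> \<delta>) lborel"
    and "snd \<in> measurable (bivt_measure \<mu> \<sigma> \<rho> \<delta>) lborel"
    and "F \<in> borel_measurable lborel"
    using assms(5) by simp_all
  from integrable_distr_eq[OF this(1,3)] integrable_distr_eq[OF this(2,3)] show
    "integrable (bivt_measure \<mu> \<sigma> \<rho> \<delta>) (\<lambda>p. F (fst p))"
    "integrable (bivt_measure \<mu> \<sigma> \<rho> \<delta>) (\<lambda>p. F (snd p))"
    using assms(6) unfolding distr_bivt_measure_fst[OF assms(1-4)] distr_bivt_measure_snd[OF assms(1-4)]
    by blast+
qed

lemma integral_bivt_measure_fst: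
  fixes F :: "real \<Rightarrow> real"
  assumes "\<delta> > 0" and "\<sigma> > 0" and "-1 \<le> \<rho>" and "\<rho> \<le> 1" and "F \<in> borel_measurable borel"
  shows "(\<integral>p. F (fst p) \<partial>bivt_measure \<mu> \<sigma> \<rho> \<delta>) = (\<integral>x. F x \<partial>t_measure \<delta> \<mu> (\<sigma>\<^sup>2))"
proof -
  have "fst \<in> measurable (bivt_measure \<mu> \<sigma> \<rho> \<delta>) lborel" and "F \<in> borel_measurable lborel"
    using assms(5) by simp_all
  from integral_distr[OF this] show ?thesis
    unfolding distr_bivt_measure_fst[OF assms(1-4)] by (rule sym)
qed

lemma integral_bivt_measure_truncated_sum:
  assumes "\<delta> > 1" and "\<sigma> > 0" and "-1 \<le> \<rho>" and "\<rho> \<le> 1"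
  shows "(\<integral>p. (fst p + snd p) * indicator {0<..} (fst p) \<partial>bivt_measure \<mu> \<sigma> \<rho> \<delta>)
       = (\<integral>x. (2 * \<mu> + (1 + \<rho>) * (x - \<mu>)) * indicator {0<..} x \<partial>t_measure \<delta> \<mu> (\<sigma>\<^sup>2))"
proof -
  let ?B = "bivt_measure \<mu> \<sigma> \<rho> \<delta>" and ?T = "t_measure \<delta> \<mu> (\<sigma>\<^sup>2)"
  have params: "\<delta> > 0" "\<sigma> > 0" "-1 \<le> \<rho>" "\<rho> \<le> 1"
    using assms by simp_all
  interpret B: prob_space ?B
    using params by (rule prob_space_bivt_measure)
  interpret T: prob_space ?T
    using params by (intro prob_space_t_measure) simp_all
  define F where "F x = (2 * \<mu> + (1 + \<rho>) * (x - \<mu>)) * indicator {0<..} x" for x :: real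
  define r where "r p = (snd p - \<mu> - \<rho> * (fst p - \<mu>)) * indicator {0<..} (fst p)" for p :: "real \<times> real"
  have [measurable]: "F \<in> borel_measurable borel" and id_meas: "(\<lambda>x::real. x) \<in> borel_measurable borel"
    unfolding F_def by measurable
  have id_int: "integrable ?T (\<lambda>x. x)"
    using assms by (intro integrable_t_measure_id) auto
  then have "integrable ?T F"
    unfolding F_def by (intro integrable_real_mult_indicator) auto
  then have "integrable ?B (\<lambda>p. F (fst p))"
    using params by (intro integrable_bivt_measure_marginals) auto
  moreover have "integrable ?B r"
  proof -
    have "integrable ?B (\<lambda>p. snd p - \<mu> - \<rho> * (fst p - \<mu>))"
      using integrable_bivt_measure_marginals[OF params id_meas id_int] by auto
    then have "integrable ?B (\<lambda>p. (snd p - \<mu> - \<rho> * (fst p - \<mu>)) * indicator (fst -` {0<..}) p)"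
      using measurable_sets[OF borel_measurable_fst, of "{0<..} :: real set"]
      by (intro integrable_real_mult_indicator) auto
    then show ?thesis
      unfolding r_def indicator_vimage .
  qed
  moreover have "(\<lambda>p. (fst p + snd p) * indicator {0<..} (fst p)) = (\<lambda>p. F (fst p) + r p)"
    by (simp add: fun_eq_iff F_def r_def algebra_simps)
  ultimately have "(\<integral>p. (fst p + snd p) * indicator {0<..} (fst p) \<partial>?B)
      = (\<integral>p. F (fst p) \<partial>?B) + (\<integral>p. r p \<partial>?B)"
    by (simp only: Bochner_Integration.integral_add)
  also have "(\<integral>p. r p \<partial>?B) = 0"
    using params unfolding r_def by (intro integral_bivt_measure_residual) auto
  also have "(\<integral>p. F (fst p) \<partial>?B) = (\<integral>x. F x \<partial>?T)"
    using params by (intro integral_bivt_measure_fst) auto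
  finally show ?thesis
    by (simp only: F_def add_0_right)
qed

lemma integral_bivt_measure_truncated_sum_neg:
  assumes "\<delta> > 2" and "\<sigma> > 0" and "\<mu> < 0" and "-1 \<le> \<rho>" and "\<rho> \<le> 1"
    and "\<rho> < 2 * (- \<mu> / \<sigma>) * W_fun \<delta> (- \<mu> / \<sigma>) - 1"
  shows "(\<integral>p. (fst p + snd p) * indicator {0<..} (fst p) \<partial>bivt_measure \<mu> \<sigma> \<rho> \<delta>) < 0"
proof -
  have "(\<integral>p. (fst p + snd p) * indicator {0<..} (fst p) \<partial>bivt_measure \<mu> \<sigma> \<rho> \<delta>)
      = (\<integral>x. (2 * \<mu> + (1 + \<rho>) * (x - \<mu>)) * indicator {0<..} x \<partial>t_measure \<delta> \<mu> (\<sigma>\<^sup>2))"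
    using assms by (intro integral_bivt_measure_truncated_sum) auto
  also have "\<dots> < 0"
    using assms by (intro integral_t_measure_truncated_neg) auto
  finally show ?thesis .
qed

theorem proposition7:
  fixes M :: "'w measure" and A :: "'w \<Rightarrow> 'c" and u v :: 'c
    and U V :: "'w \<Rightarrow> real" and p_u p_v \<mu> \<sigma> \<rho> \<delta> :: real
  assumes "prob_space M"
    and "u \<noteq> v"
    and "A \<in> measurable M (count_space UNIV)"
    and "\<forall>\<omega>\<in>space M. A \<omega> \<in> {u, v}"
    and "measure M {\<omega>\<in>space M. A \<omega> = u} = p_u"
    and "measure M {\<omega>\<in>space M. A \<omega> = v} = p_v"
    and "p_u + p_v = 1"
    and "U \<in> borel_measurable M" and "V \<in> borel_measurable M"
    and "\<forall>c. \<forall>B \<in> sets (borel :: (real \<times> real) measure).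
           measure M {\<omega>\<in>space M. A \<omega> = c \<and> (U \<omega>, V \<omega>) \<in> B}
         = measure M {\<omega>\<in>space M. A \<omega> = c} * measure M {\<omega>\<in>space M. (U \<omega>, V \<omega>) \<in> B}"
    and "\<mu> < 0" and "\<sigma> > 0" and "\<delta> > 2" and "\<rho> \<le> 1"
    and "distr M lborel (\<lambda>\<omega>. (U \<omega>, V \<omega>)) = bivt_measure \<mu> \<sigma> \<rho> \<delta>"
    and "-1 \<le> \<rho>"
    and "\<rho> < 2 * (-\<mu> / \<sigma>) * W_fun \<delta> (-\<mu> / \<sigma>) - 1"
  shows "(let f = (\<lambda>z::real.
              p_u * measure M {\<omega>\<in>space M. U \<omega> > z}
                  * cond_exp_event M (\<lambda>\<omega>. U \<omega> + V \<omega>) {\<omega>\<in>space M. U \<omega> > z}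
            + p_v * measure M {\<omega>\<in>space M. V \<omega> > z}
                  * cond_exp_event M (\<lambda>\<omega>. U \<omega> + V \<omega>) {\<omega>\<in>space M. V \<omega> > z})
         in f 0 < 0)"
proof -
  interpret prob_space M
    by (rule assms(1))
  note [measurable] = assms(8,9)
  let ?B = "bivt_measure \<mu> \<sigma> \<rho> \<delta>"
  define h where "h p = (fst p + snd p) * indicator {0<..} (fst p)" for p :: "real \<times> real"
  have [measurable]: "h \<in> borel_measurable borel"
    unfolding h_def by measurable
  have UV: "(\<lambda>\<omega>. (U \<omega>, V \<omega>)) \<in> measurable M lborel"
    by simp
  have truncated_U:
    "(\<integral>\<omega>. (U \<omega> + V \<omega>) * indicator {\<omega>\<in>space M. U \<omega> > 0} \<omega> \<partial>M) = integral\<^sup>L ?B h"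
    using integral_distr[OF UV, of h] assms(15)
    by (simp add: h_def indicator_def cong: Bochner_Integration.integral_cong)
  \<comment> \<open>By exchangeability the V-truncated expectation is the same.\<close>
  have "(\<integral>\<omega>. (U \<omega> + V \<omega>) * indicator {\<omega>\<in>space M. V \<omega> > 0} \<omega> \<partial>M)
      = (\<integral>p. h (snd p, fst p) \<partial>?B)"
    using integral_distr[OF UV, of "\<lambda>p. h (snd p, fst p)"] assms(15)
    by (simp add: h_def indicator_def algebra_simps cong: Bochner_Integration.integral_cong)
  also have "\<dots> = integral\<^sup>L ?B h"
    by (rule integral_bivt_measure_swap) simp
  finally have truncated_V:
    "(\<integral>\<omega>. (U \<omega> + V \<omega>) * indicator {\<omega>\<in>space M. V \<omega> > 0} \<omega> \<partial>M) = integral\<^sup>L ?B h" .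
  have "integral\<^sup>L ?B h < 0"
    unfolding h_def using assms by (intro integral_bivt_measure_truncated_sum_neg) auto
  moreover have "{\<omega>\<in>space M. U \<omega> > 0} \<in> events" and "{\<omega>\<in>space M. V \<omega> > 0} \<in> events"
    by measurable
  ultimately show ?thesis
    using assms(7) truncated_U truncated_V measure_mult_cond_exp_event[OF finite_measure_axioms]
    by (simp add: mult.assoc distrib_right[symmetric])
qed

end
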